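(* For each type $X$ in the list below, the determinant of the quantum affine Cartan matrix of type $X$ is $$\det C_{\mathrm{aff}}(t)=\frac{(1-t^{2p})(1-t^{2q})(1-t^{2r})}{1-t^2},$$ where $(p,q,r)$ is given by: $\mathsf A_l$ ($l\ge0$): $(\tfrac12(l+1),\tfrac12(l+1),1)$; $\mathsf D_l$ ($l\ge4$): $(l-2,2,2)$; $\mathsf E_6$: $(3,3,2)$; $\mathsf E_7$: $(4,3,2)$; $\mathsf E_8$: $(5,3,2)$; $\mathsf C_l$ ($l\ge2$): $(l,1,1)$; $\mathsf B_l$ ($l\ge3$): $(l-1,2,1)$; $\mathsf F_4$: $(3,2,1)$; $\mathsf G_2$: $(2,1,1)$.
   Context: For a type $X$ of rank $l$, let $C_{\mathrm{aff}}$ be the $(l+1)\times(l+1)$ affine (untwisted, i.e. of type $X^{(1)}$) generalized Cartan matrix; for $\mathsf A_l$ with $l\ge2$ this is the Cartan matrix of a cycle with $l+1$ vertices, and for $\mathsf A_1$ it is $\begin{pmatrix}2&-2\\-2&2\end{pmatrix}$. The quantum affine Cartan matrix $C_{\mathrm{aff}}(t)$ is obtained from $C_{\mathrm{aff}}$ by replacing each diagonal entry $2$ by $1+t^2$ and multiplying each off-diagonal entry by $t$, i.e. $C_{\mathrm{aff}}(t)=(1-t)^2\mathbf 1+tC_{\mathrm{aff}}$; for type $\mathsf A_0$ one sets $C_{\mathrm{aff}}(t)=((1-t)^2)$. *)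

theory Defs
  imports "Jordan_Normal_Form.Determinant"
begin

datatype cartan_type = TA nat | TD nat | TE6 | TE7 | TE8 | TC nat | TB nat | TF4 | TG2

fun valid_type :: "cartan_type \<Rightarrow> bool" where
  "valid_type (TA l) = True"
| "valid_type (TD l) = (l \<ge> 4)"
| "valid_type (TC l) = (l \<ge> 2)"
| "valid_type (TB l) = (l \<ge> 3)"
| "valid_type _ = True"

fun rank_of :: "cartan_type \<Rightarrow> nat" where
  "rank_of (TA l) = l" | "rank_of (TD l) = l" | "rank_of TE6 = 6" | "rank_of TE7 = 7"
| "rank_of TE8 = 8" | "rank_of (TC l) = l" | "rank_of (TB l) = l" | "rank_of TF4 = 4"
| "rank_of TG2 = 2"

definition sl_entry :: "(nat \<times> nat) set \<Rightarrow> nat \<Rightarrow> nat \<Rightarrow> int" where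
  "sl_entry E i j = (if i = j then 2 else if (i, j) \<in> E \<or> (j, i) \<in> E then -1 else 0)"

text \<open>Entries a_ij of the untwisted affine generalized Cartan matrix X^(1), nodes 0..l,
  node 0 the affine node, Bourbaki numbering of the finite nodes.  For non-simply-laced
  bonds, a_ij = -2 (resp. -3) when node i is short and node j long.\<close>
fun aff_entry :: "cartan_type \<Rightarrow> nat \<Rightarrow> nat \<Rightarrow> int" where
  "aff_entry (TA l) i j =
     (if i = j then 2 else if l = 1 then -2
      else if j = (i + 1) mod (l + 1) \<or> i = (j + 1) mod (l + 1) then -1 else 0)"
| "aff_entry (TD l) i j =
     sl_entry ({(0, 2), (l - 2, l)} \<union> {(k, k + 1) | k. 1 \<le> k \<and> k \<le> l - 2}) i j"
| "aff_entry TE6 i j = sl_entry {(1,3),(3,4),(4,5),(5,6),(2,4),(0,2)} i j"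
| "aff_entry TE7 i j = sl_entry {(1,3),(3,4),(4,5),(5,6),(6,7),(2,4),(0,1)} i j"
| "aff_entry TE8 i j = sl_entry {(1,3),(3,4),(4,5),(5,6),(6,7),(7,8),(2,4),(0,8)} i j"
| "aff_entry (TC l) i j =
     (if (i, j) = (1, 0) \<or> (i, j) = (l - 1, l) then -2
      else sl_entry {(k, k + 1) | k. k < l} i j)"
| "aff_entry (TB l) i j =
     (if (i, j) = (l, l - 1) then -2
      else sl_entry ({(0, 2)} \<union> {(k, k + 1) | k. 1 \<le> k \<and> k < l}) i j)"
| "aff_entry TF4 i j = (if (i, j) = (3, 2) then -2 else sl_entry {(k, k + 1) | k. k < 4} i j)"
| "aff_entry TG2 i j = (if (i, j) = (2, 1) then -3 else sl_entry {(k, k + 1) | k. k < 2} i j)"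

definition cartan_aff :: "cartan_type \<Rightarrow> int mat" where
  "cartan_aff X = mat (Suc (rank_of X)) (Suc (rank_of X)) (\<lambda>(i, j). aff_entry X i j)"

definition qcartan_aff :: "cartan_type \<Rightarrow> real \<Rightarrow> real mat" where
  "qcartan_aff X t =
     (if X = TA 0 then mat 1 1 (\<lambda>_. (1 - t)\<^sup>2)
      else (1 - t)\<^sup>2 \<cdot>\<^sub>m 1\<^sub>m (Suc (rank_of X)) + t \<cdot>\<^sub>m map_mat of_int (cartan_aff X))"

text \<open>The triple (p,q,r) of the theorem (p may be a half-integer for type A).\<close>
fun pqr :: "cartan_type \<Rightarrow> rat \<times> rat \<times> rat" where
  "pqr (TA l) = (of_nat (l + 1) / 2, of_nat (l + 1) / 2, 1)"
| "pqr (TD l) = (of_nat l - 2, 2, 2)"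
| "pqr TE6 = (3, 3, 2)" | "pqr TE7 = (4, 3, 2)" | "pqr TE8 = (5, 3, 2)"
| "pqr (TC l) = (of_nat l, 1, 1)"
| "pqr (TB l) = (of_nat l - 1, 2, 1)"
| "pqr TF4 = (3, 2, 1)" | "pqr TG2 = (2, 1, 1)"

text \<open>t^(2a) for a with 2a a nonnegative integer.\<close>
definition pow2 :: "real \<Rightarrow> rat \<Rightarrow> real" where
  "pow2 t a = t ^ nat \<lfloor>2 * a\<rfloor>"

end

theory Submission
  imports Defs "HOL-Combinatorics.Permutations"
begin

text \<open>Write \<open>u = t\<^sup>2\<close>.  Every affine diagram except \<open>A\<^sub>l\<close> is a tree, and deleting a leaf
  \<open>a\<close> joined to \<open>b\<close> expands the principal minor of \<open>C\<^sub>a\<^sub>f\<^sub>f(t)\<close> on a node set \<open>S\<close> as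
  \<open>D(S) = (1 + u) D(S - {a}) - a\<^sub>a\<^sub>b a\<^sub>b\<^sub>a u D(S - {a, b})\<close>.  Along a simply laced path this is
  the recurrence \<open>x(k + 2) = (1 + u) x(k + 1) - u x(k)\<close>, with characteristic roots \<open>1\<close> and
  \<open>u\<close>, which settles the series \<open>B\<close>, \<open>C\<close> and \<open>D\<close>; the exceptional types are finite chains of
  leaf deletions.  For the cycle \<open>A\<^sub>l\<close> (\<open>l \<ge> 1\<close>) one has \<open>C\<^sub>a\<^sub>f\<^sub>f(t) = B B\<^sup>T\<close> with
  \<open>B = 1 - t P\<close>, \<open>P\<close> the cyclic shift, and expanding along the first column gives
  \<open>det B = 1 - t\<^sup>l\<^sup>+\<^sup>1\<close>.\<close>

definition principal_mat :: "(nat \<Rightarrow> nat \<Rightarrow> 'a::comm_ring_1) \<Rightarrow> nat list \<Rightarrow> 'a mat" where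
  "principal_mat f xs = mat (length xs) (length xs) (\<lambda>(i, j). f (xs ! i) (xs ! j))"

lemma principal_mat_carrier: "principal_mat f xs \<in> carrier_mat (length xs) (length xs)"
  by (simp add: principal_mat_def)

lemma det_principal_mat_Nil [simp]: "det (principal_mat f []) = 1"
  by (simp add: principal_mat_def)

lemma det_principal_mat_single [simp]: "det (principal_mat f [a]) = f a a"
  by (subst det_single) (auto simp: principal_mat_def)

lemma det_permute_rows_cols:
  assumes A: "A \<in> carrier_mat n n" and p: "p permutes {0..<n}"
  shows "det (mat n n (\<lambda>(i, j). A $$ (p i, p j))) = det A"
proof -
  let ?R = "mat n n (\<lambda>(i, j). A $$ (p i, j))"
  let ?C = "mat n n (\<lambda>(i, j). ?R\<^sup>T $$ (p i, j))"
  have R: "?R \<in> carrier_mat n n"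
    by simp
  have "mat n n (\<lambda>(i, j). A $$ (p i, p j)) = ?C\<^sup>T"
  proof (rule eq_matI)
    fix i j
    assume "i < dim_row ?C\<^sup>T" "j < dim_col ?C\<^sup>T"
    then have "i < n" "j < n" "p i < n" "p j < n"
      using permutes_in_image[OF p] by auto
    then show "mat n n (\<lambda>(i, j). A $$ (p i, p j)) $$ (i, j) = ?C\<^sup>T $$ (i, j)"
      by (simp only: index_transpose_mat index_mat dim_row_mat dim_col_mat split)
  qed auto
  then have "det (mat n n (\<lambda>(i, j). A $$ (p i, p j))) = signof p * (signof p * det A)"
    using det_permute_rows[OF A p] det_permute_rows[of "?R\<^sup>T" n p] p
    by (simp add: det_transpose[OF R] det_transpose[of _ n])
  also have "\<dots> = det A"
    by (simp flip: mult.assoc of_int_mult)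
  finally show ?thesis .
qed

lemma det_principal_mat_mset_eq:
  assumes "mset xs = mset ys"
  shows "det (principal_mat f xs) = det (principal_mat f ys)"
proof -
  obtain p where p: "p permutes {..<length ys}" "permute_list p ys = xs"
    using mset_eq_permutation[OF assms] by blast
  let ?n = "length ys"
  let ?P = "mat ?n ?n (\<lambda>(i, j). principal_mat f ys $$ (p i, p j))"
  have len: "length xs = ?n"
    using p(2) by auto
  have "principal_mat f xs = ?P"
  proof (rule eq_matI)
    fix i j
    assume "i < dim_row ?P" "j < dim_col ?P"
    then have "i < ?n" "j < ?n" "p i < ?n" "p j < ?n"
      using permutes_in_image[OF p(1)] by auto
    then show "principal_mat f xs $$ (i, j) = ?P $$ (i, j)"
      using p(2) by (auto simp: principal_mat_def len permute_list_nth[OF p(1)])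
  qed (simp_all add: principal_mat_def len)
  then show ?thesis
    using det_permute_rows_cols[OF principal_mat_carrier] p(1) by (simp add: lessThan_atLeast0)
qed

lemma det_expand_last_row_single:
  assumes A: "A \<in> carrier_mat (Suc n) (Suc n)" and zero: "\<And>j. j < n \<Longrightarrow> A $$ (n, j) = 0"
  shows "det A = A $$ (n, n) * det (mat_delete A n n)"
proof -
  have "det A = (\<Sum>j<Suc n. A $$ (n, j) * cofactor A n j)"
    by (rule laplace_expansion_row[OF A]) simp
  also have "\<dots> = A $$ (n, n) * cofactor A n n"
    using zero by simp
  finally show ?thesis
    by (simp add: cofactor_def flip: mult_2)
qed

lemma det_expand_last_col_single:
  assumes A: "A \<in> carrier_mat (Suc n) (Suc n)" and zero: "\<And>i. i < n \<Longrightarrow> A $$ (i, n) = 0"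
  shows "det A = A $$ (n, n) * det (mat_delete A n n)"
proof -
  have "det A = (\<Sum>i<Suc n. A $$ (i, n) * cofactor A i n)"
    by (rule laplace_expansion_column[OF A]) simp
  also have "\<dots> = A $$ (n, n) * cofactor A n n"
    using zero by simp
  finally show ?thesis
    by (simp add: cofactor_def flip: mult_2)
qed

lemma mat_delete_principal_mat_last:
  "mat_delete (principal_mat f (xs @ [a])) (length xs) (length xs) = principal_mat f xs"
  by (rule eq_matI) (auto simp: mat_delete_def principal_mat_def nth_append)

lemma det_principal_mat_snoc_isolated:
  assumes "\<forall>x\<in>set zs. f a x = 0"
  shows "det (principal_mat f (zs @ [a])) = f a a * det (principal_mat f zs)"
proof -
  have "det (principal_mat f (zs @ [a])) = principal_mat f (zs @ [a]) $$ (length zs, length zs) *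
      det (mat_delete (principal_mat f (zs @ [a])) (length zs) (length zs))"
    by (rule det_expand_last_row_single)
      (use assms in \<open>auto simp: principal_mat_def nth_append\<close>)
  then show ?thesis
    unfolding mat_delete_principal_mat_last by (simp add: principal_mat_def)
qed

lemma det_principal_mat_snoc_leaf:
  assumes "\<forall>x\<in>set zs. f a x = 0 \<and> f x a = 0"
  shows "det (principal_mat f (zs @ [b, a])) =
    f a a * det (principal_mat f (zs @ [b])) - f a b * f b a * det (principal_mat f zs)"
proof -
  define n where "n = length zs"
  let ?M = "principal_mat f (zs @ [b, a])"
  let ?A = "mat_delete ?M (Suc n) n"
  have M: "?M \<in> carrier_mat (Suc (Suc n)) (Suc (Suc n))"
    by (simp add: principal_mat_def n_def)
  have "det ?M = (\<Sum>j<Suc (Suc n). ?M $$ (Suc n, j) * cofactor ?M (Suc n) j)"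
    by (rule laplace_expansion_row[OF M]) simp
  also have "\<dots> = f a b * cofactor ?M (Suc n) n + f a a * cofactor ?M (Suc n) (Suc n)"
    using assms by (simp add: principal_mat_def n_def nth_append)
  also have "cofactor ?M (Suc n) (Suc n) = det (principal_mat f (zs @ [b]))"
    using mat_delete_principal_mat_last[of f "zs @ [b]" a]
    by (simp add: cofactor_def n_def flip: mult_2)
  also have "det ?A = f b a * det (principal_mat f zs)"
  proof -
    have "det ?A = ?A $$ (n, n) * det (mat_delete ?A n n)"
      by (rule det_expand_last_col_single)
        (use assms in \<open>auto simp: principal_mat_def mat_delete_def n_def nth_append\<close>)
    moreover have "mat_delete ?A n n = principal_mat f zs"
      by (rule eq_matI) (auto simp: principal_mat_def mat_delete_def n_def nth_append)
    ultimately show ?thesis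
      by (simp add: principal_mat_def mat_delete_def n_def nth_append)
  qed
  then have "cofactor ?M (Suc n) n = - (f b a * det (principal_mat f zs))"
    by (simp add: cofactor_def)
  finally show ?thesis
    by (simp add: algebra_simps)
qed

lemma det_principal_mat_remove_isolated:
  assumes "distinct xs" "a \<in> set xs" "\<forall>x\<in>set xs. x \<noteq> a \<longrightarrow> f a x = 0"
  shows "det (principal_mat f xs) = f a a * det (principal_mat f (remove1 a xs))"
proof -
  have "det (principal_mat f xs) = det (principal_mat f (remove1 a xs @ [a]))"
    using assms(2) by (intro det_principal_mat_mset_eq) simp
  also have "\<dots> = f a a * det (principal_mat f (remove1 a xs))"
    using assms by (intro det_principal_mat_snoc_isolated) auto
  finally show ?thesis .
qed

lemma det_principal_mat_remove_leaf:
  assumes "distinct xs" "a \<in> set xs" "b \<in> set xs" "a \<noteq> b"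
    and "\<forall>x\<in>set xs. x \<noteq> a \<and> x \<noteq> b \<longrightarrow> f a x = 0 \<and> f x a = 0"
  shows "det (principal_mat f xs) = f a a * det (principal_mat f (remove1 a xs))
    - f a b * f b a * det (principal_mat f (remove1 b (remove1 a xs)))"
proof -
  define zs where "zs = remove1 b (remove1 a xs)"
  have b: "b \<in> set (remove1 a xs)"
    using assms(3,4) by (simp add: in_set_remove1)
  have mset_remove1_snoc: "mset (remove1 y ys @ [y]) = mset ys" if "y \<in> set ys" for y ys
    using that by simp
  have mset_b: "mset (zs @ [b]) = mset (remove1 a xs)"
    unfolding zs_def using b by (rule mset_remove1_snoc)
  have "mset xs = mset (remove1 a xs) + {#a#}"
    using assms(2) by simp
  also have "\<dots> = mset (zs @ [b, a])"
    unfolding mset_b[symmetric] by simp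
  finally have "det (principal_mat f xs) = det (principal_mat f (zs @ [b, a]))"
    by (rule det_principal_mat_mset_eq)
  also have "\<dots> = f a a * det (principal_mat f (zs @ [b])) - f a b * f b a * det (principal_mat f zs)"
  proof (rule det_principal_mat_snoc_leaf)
    have "set zs = set xs - {a, b}"
      using assms(1) by (auto simp: zs_def)
    then show "\<forall>x\<in>set zs. f a x = 0 \<and> f x a = 0"
      using assms(5) by blast
  qed
  also have "det (principal_mat f (zs @ [b])) = det (principal_mat f (remove1 a xs))"
    using mset_b by (rule det_principal_mat_mset_eq)
  finally show ?thesis
    by (simp add: zs_def)
qed

lemma det_principal_mat_upt_Suc_Suc:
  assumes "\<forall>x<k. f (Suc k) x = 0 \<and> f x (Suc k) = 0"
  shows "det (principal_mat f [0..<Suc (Suc k)]) =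
    f (Suc k) (Suc k) * det (principal_mat f [0..<Suc k])
    - f (Suc k) k * f k (Suc k) * det (principal_mat f [0..<k])"
  using det_principal_mat_snoc_leaf[of "[0..<k]" f "Suc k" k] assms by simp

lemma recurrence_closed_form:
  fixes x :: "nat \<Rightarrow> 'a::comm_ring_1"
  assumes rec: "\<And>k. Suc (Suc k) \<le> N \<Longrightarrow> x (Suc (Suc k)) = (1 + u) * x (Suc k) - u * x k"
    and x0: "x 0 = a + b" and x1: "x 1 = a + b * u"
  shows "n \<le> N \<Longrightarrow> x n = a + b * u ^ n"
proof (induction n rule: less_induct)
  case (less n)
  consider "n = 0" | "n = 1" | k where "n = Suc (Suc k)"
    by (metis One_nat_def not0_implies_Suc)
  then show ?case
  proof cases
    case 3
    then have "x n = (1 + u) * (a + b * u ^ Suc k) - u * (a + b * u ^ k)"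
      using rec[of k] less by simp
    also have "\<dots> = a + b * u ^ n"
      using 3 by (simp add: algebra_simps)
    finally show ?thesis .
  qed (use x0 x1 in simp_all)
qed

text \<open>The initial segment shared by the diagrams \<open>B\<^sub>l\<^sup>(\<^sup>1\<^sup>)\<close> and \<open>D\<^sub>l\<^sup>(\<^sup>1\<^sup>)\<close>: the nodes 0 and 1 are
  both joined to 2, which starts a simply laced path \<open>2 - 3 - \<dots> - N + 1\<close>.\<close>

lemma det_principal_mat_fork_path:
  fixes f :: "nat \<Rightarrow> nat \<Rightarrow> 'a::comm_ring_1"
  assumes diag: "\<And>i. i \<le> Suc N \<Longrightarrow> f i i = 1 + u" and N: "1 \<le> N"
    and fork: "f 0 1 = 0" "f 1 0 = 0" "f 2 0 * f 0 2 = u" "f 2 1 * f 1 2 = u"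
    and path: "\<And>k. 2 \<le> k \<Longrightarrow> k \<le> N \<Longrightarrow>
      f (Suc k) k * f k (Suc k) = u \<and> (\<forall>x<k. f (Suc k) x = 0 \<and> f x (Suc k) = 0)"
    and n: "n \<le> N"
  shows "det (principal_mat f [0..<Suc (Suc n)]) = (1 + u) * (1 + u ^ Suc n)"
proof -
  define x where "x n = det (principal_mat f [0..<Suc (Suc n)])" for n
  have x0: "x 0 = (1 + u) * (1 + u)"
    unfolding x_def using det_principal_mat_upt_Suc_Suc[of 0 f] diag[of 0] diag[of 1] fork N
    by simp
  have d12: "det (principal_mat f [1, 2]) = (1 + u) * (1 + u) - u"
    using det_principal_mat_snoc_leaf[of "[]" f 2 1] diag[of 1] diag[of 2] fork N by simp
  have "x 1 = det (principal_mat f [0, 1, 2])"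
    by (simp add: x_def numeral_3_eq_3 numeral_2_eq_2)
  also have "\<dots> = (1 + u) * ((1 + u) * (1 + u) - u) - u * (1 + u)"
    using det_principal_mat_remove_leaf[of "[0, 1, 2]" 0 2 f] diag[of 0] diag[of 1] fork d12 N
    by (simp add: mult.commute)
  finally have x1: "x 1 = (1 + u) * (1 + u * u)"
    by (simp add: algebra_simps)
  have "x n = (1 + u) + (1 + u) * u * u ^ n"
  proof (rule recurrence_closed_form[of N x u, OF _ _ _ n])
    fix k
    assume "Suc (Suc k) \<le> N"
    then show "x (Suc (Suc k)) = (1 + u) * x (Suc k) - u * x k"
      using det_principal_mat_upt_Suc_Suc[of "Suc (Suc k)" f] path[of "Suc (Suc k)"]
        diag[of "Suc (Suc (Suc k))"]
      by (simp add: x_def mult.commute del: upt_Suc)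
  qed (use x0 x1 in \<open>simp_all add: algebra_simps\<close>)
  then show ?thesis
    by (simp add: x_def algebra_simps)
qed

definition qcartan_entry :: "cartan_type \<Rightarrow> real \<Rightarrow> nat \<Rightarrow> nat \<Rightarrow> real" where
  "qcartan_entry X t i j = (1 - t)\<^sup>2 * of_bool (i = j) + t * of_int (aff_entry X i j)"

lemma qcartan_aff_eq_principal_mat:
  "X \<noteq> TA 0 \<Longrightarrow> qcartan_aff X t = principal_mat (qcartan_entry X t) [0..<Suc (rank_of X)]"
  unfolding qcartan_aff_def principal_mat_def qcartan_entry_def cartan_aff_def
  by (intro eq_matI) (auto simp del: upt_Suc)

lemma qcartan_entry_diag: "aff_entry X i i = 2 \<Longrightarrow> qcartan_entry X t i i = 1 + t\<^sup>2"
  by (simp add: qcartan_entry_def power2_eq_square algebra_simps)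

lemma qcartan_entry_off_diag: "i \<noteq> j \<Longrightarrow> qcartan_entry X t i j = t * of_int (aff_entry X i j)"
  by (simp add: qcartan_entry_def)

definition shift_factor :: "nat \<Rightarrow> 'a::comm_ring_1 \<Rightarrow> 'a mat" where
  "shift_factor n t = mat n n (\<lambda>(i, j). of_bool (j = i) - t * of_bool (j = Suc i mod n))"

lemma shift_factor_carrier: "shift_factor n t \<in> carrier_mat n n"
  by (simp add: shift_factor_def)

lemma Suc_mod_Suc: "i \<le> k \<Longrightarrow> Suc i mod Suc k = (if i = k then 0 else Suc i)"
  by (simp add: mod_Suc)

lemma shift_factor_mult_transpose_index:
  assumes "i < n" "j < n"
  shows "(shift_factor n t * (shift_factor n t)\<^sup>T) $$ (i, j) = of_bool (i = j)
    - t * of_bool (i = Suc j mod n) - t * of_bool (j = Suc i mod n)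
    + t\<^sup>2 * of_bool (Suc i mod n = Suc j mod n)"
proof -
  have "(shift_factor n t * (shift_factor n t)\<^sup>T) $$ (i, j) = (\<Sum>k<n.
      (of_bool (k = i) - t * of_bool (k = Suc i mod n))
      * (of_bool (k = j) - t * of_bool (k = Suc j mod n)))"
    using assms by (simp add: shift_factor_def scalar_prod_def lessThan_atLeast0)
  also have "\<dots> = (\<Sum>k<n. (if k = i then of_bool (i = j) else 0)
      - t * (if k = i then of_bool (i = Suc j mod n) else 0)
      - t * (if k = Suc i mod n then of_bool (j = Suc i mod n) else 0)
      + t\<^sup>2 * (if k = Suc i mod n then of_bool (Suc i mod n = Suc j mod n) else 0))"
    by (intro sum.cong) (auto simp: power2_eq_square algebra_simps)
  also have "\<dots> = of_bool (i = j)
    - t * of_bool (i = Suc j mod n) - t * of_bool (j = Suc i mod n)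
    + t\<^sup>2 * of_bool (Suc i mod n = Suc j mod n)"
    using assms by (simp add: sum.distrib sum_subtractf flip: sum_distrib_left)
  finally show ?thesis .
qed

lemma det_shift_factor:
  assumes "0 < n"
  shows "det (shift_factor n t) = 1 - t ^ n"
proof -
  obtain k where n: "n = Suc k"
    using assms gr0_implies_Suc by blast
  let ?B = "shift_factor n t"
  show ?thesis
  proof (cases "k = 0")
    case True
    then show ?thesis
      using n by (simp add: det_single shift_factor_def)
  next
    case False
    have "det ?B = (\<Sum>i<n. ?B $$ (i, 0) * cofactor ?B i 0)"
      by (rule laplace_expansion_column[OF shift_factor_carrier]) (simp add: n)
    also have "\<dots> = (\<Sum>i<n. (if i = 0 then cofactor ?B 0 0 else 0)
        - (if i = k then t * cofactor ?B k 0 else 0))"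
      using False by (intro sum.cong) (auto simp: shift_factor_def n Suc_mod_Suc)
    also have "\<dots> = cofactor ?B 0 0 - t * cofactor ?B k 0"
      by (simp add: sum_subtractf n)
    moreover have "det (mat_delete ?B 0 0) = 1"
      by (subst det_upper_triangular[of _ k])
        (auto simp: upper_triangular_def mat_delete_def shift_factor_def n Suc_mod_Suc
          prod_list_diag_prod intro!: prod.neutral)
    moreover have "det (mat_delete ?B k 0) = (- t) ^ k"
      by (subst det_lower_triangular[of k])
        (auto simp: mat_delete_def shift_factor_def n Suc_mod_Suc prod_list_diag_prod
          lessThan_atLeast0 intro!: prod.cong)
    moreover have "(- 1) ^ k * (- t) ^ k = t ^ k"
      by (simp flip: power_mult_distrib)
    ultimately show ?thesis
      by (simp add: cofactor_def n)
  qed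
qed

lemma aff_entry_TA:
  assumes "1 \<le> l" "i \<le> l" "j \<le> l"
  shows "aff_entry (TA l) i j =
    2 * of_bool (i = j) - of_bool (i = Suc j mod Suc l) - of_bool (j = Suc i mod Suc l)"
  using assms by (auto simp: Suc_mod_Suc)

lemma qcartan_entry_TA:
  assumes "1 \<le> l" "i \<le> l" "j \<le> l"
  shows "qcartan_entry (TA l) t i j = of_bool (i = j)
    - t * of_bool (i = Suc j mod Suc l) - t * of_bool (j = Suc i mod Suc l)
    + t\<^sup>2 * of_bool (Suc i mod Suc l = Suc j mod Suc l)"
proof -
  have "(Suc i mod Suc l = Suc j mod Suc l) = (i = j)"
    using assms by (auto simp: Suc_mod_Suc)
  then show ?thesis
    using assms by (simp add: qcartan_entry_def aff_entry_TA power2_eq_square algebra_simps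
        del: aff_entry.simps)
qed

lemma principal_mat_qcartan_entry_TA:
  assumes "1 \<le> l"
  shows "principal_mat (qcartan_entry (TA l) t) [0..<Suc l]
    = shift_factor (Suc l) t * (shift_factor (Suc l) t)\<^sup>T"
proof (rule eq_matI)
  fix i j
  assume "i < dim_row (shift_factor (Suc l) t * (shift_factor (Suc l) t)\<^sup>T)"
    and "j < dim_col (shift_factor (Suc l) t * (shift_factor (Suc l) t)\<^sup>T)"
  then have "i < Suc l" "j < Suc l"
    by (simp_all add: carrier_matD[OF shift_factor_carrier])
  then show "principal_mat (qcartan_entry (TA l) t) [0..<Suc l] $$ (i, j)
      = (shift_factor (Suc l) t * (shift_factor (Suc l) t)\<^sup>T) $$ (i, j)"
    using assms by (subst shift_factor_mult_transpose_index)
      (simp_all add: principal_mat_def qcartan_entry_TA del: upt_Suc)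
qed (simp_all add: principal_mat_def carrier_matD[OF shift_factor_carrier])

lemma det_qcartan_aff_TA: "det (qcartan_aff (TA l) t) = (1 - t ^ Suc l)\<^sup>2"
proof (cases "l = 0")
  case True
  then show ?thesis
    by (simp add: qcartan_aff_def det_single)
next
  case False
  note B = shift_factor_carrier[of "Suc l" t]
  have "det (qcartan_aff (TA l) t) = det (shift_factor (Suc l) t * (shift_factor (Suc l) t)\<^sup>T)"
    using False
    by (simp add: qcartan_aff_eq_principal_mat principal_mat_qcartan_entry_TA del: upt_Suc)
  also have "\<dots> = (det (shift_factor (Suc l) t))\<^sup>2"
    using B by (simp add: det_mult[OF B] det_transpose[OF B] power2_eq_square)
  finally show ?thesis
    by (simp add: det_shift_factor)
qed

lemma qcartan_entry_TC:
  "1 \<le> l \<Longrightarrow> qcartan_entry (TC l) t i j =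
    (if i = j then 1 + t\<^sup>2 else if (i, j) = (1, 0) \<or> (i, j) = (l - 1, l) then -2 * t
     else if j = Suc i \<and> i < l \<or> i = Suc j \<and> j < l then -t else 0)"
  by (auto simp: qcartan_entry_def sl_entry_def power2_eq_square algebra_simps)

lemma qcartan_entry_TB:
  "2 \<le> l \<Longrightarrow> qcartan_entry (TB l) t i j =
    (if i = j then 1 + t\<^sup>2 else if (i, j) = (l, l - 1) then -2 * t
     else if i = 0 \<and> j = 2 \<or> i = 2 \<and> j = 0
       \<or> j = Suc i \<and> 1 \<le> i \<and> i < l \<or> i = Suc j \<and> 1 \<le> j \<and> j < l then -t
     else 0)"
  by (auto simp: qcartan_entry_def sl_entry_def power2_eq_square algebra_simps)

lemma qcartan_entry_TD:
  "4 \<le> l \<Longrightarrow> qcartan_entry (TD l) t i j =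
    (if i = j then 1 + t\<^sup>2
     else if i = 0 \<and> j = 2 \<or> i = 2 \<and> j = 0 \<or> i = l - 2 \<and> j = l \<or> i = l \<and> j = l - 2
       \<or> j = Suc i \<and> 1 \<le> i \<and> i \<le> l - 2 \<or> i = Suc j \<and> 1 \<le> j \<and> j \<le> l - 2 then -t
     else 0)"
  by (auto simp: qcartan_entry_def sl_entry_def power2_eq_square algebra_simps)

lemma det_qcartan_aff_TC:
  assumes "2 \<le> l"
  shows "det (qcartan_aff (TC l) t) = (1 - t\<^sup>2) * (1 - t ^ (2 * l))"
proof -
  let ?f = "qcartan_entry (TC l) t"
  define m where "m = l - 2"
  have l: "l = Suc (Suc m)"
    using assms by (simp add: m_def)
  define x where "x n = det (principal_mat ?f [0..<Suc n])" for n
  have x: "x n = 1 + t\<^sup>2 * (t\<^sup>2) ^ n" if "n \<le> Suc m" for n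
  proof (rule recurrence_closed_form[OF _ _ _ that])
    fix k
    assume "Suc (Suc k) \<le> Suc m"
    then show "x (Suc (Suc k)) = (1 + t\<^sup>2) * x (Suc k) - t\<^sup>2 * x k"
      using det_principal_mat_upt_Suc_Suc[of "Suc k" ?f] l
      by (simp add: x_def qcartan_entry_TC power2_eq_square del: upt_Suc)
  next
    show "x 1 = 1 + t\<^sup>2 * t\<^sup>2"
      using det_principal_mat_upt_Suc_Suc[of 0 ?f] l
      by (simp add: x_def qcartan_entry_TC power2_eq_square algebra_simps)
  qed (simp add: x_def qcartan_entry_TC l)
  have "det (qcartan_aff (TC l) t) = det (principal_mat ?f [0..<Suc l])"
    by (simp add: qcartan_aff_eq_principal_mat del: upt_Suc)
  also have "\<dots> = (1 + t\<^sup>2) * x (Suc m) - 2 * t\<^sup>2 * x m"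
    using det_principal_mat_upt_Suc_Suc[of "Suc m" ?f] l
    by (simp add: x_def qcartan_entry_TC power2_eq_square del: upt_Suc)
  also have "\<dots> = (1 - t\<^sup>2) * (1 - (t\<^sup>2) ^ l)"
    by (simp add: x l algebra_simps)
  finally show ?thesis
    by (simp flip: power_mult)
qed

lemma det_qcartan_aff_TB:
  assumes "3 \<le> l"
  shows "det (qcartan_aff (TB l) t) = (1 - t ^ 4) * (1 - t ^ (2 * (l - 1)))"
proof -
  let ?f = "qcartan_entry (TB l) t"
  define m where "m = l - 3"
  have l: "l = Suc (Suc (Suc m))"
    using assms by (simp add: m_def)
  have fork: "det (principal_mat ?f [0..<Suc (Suc n)]) = (1 + t\<^sup>2) * (1 + (t\<^sup>2) ^ Suc n)"
    if "n \<le> Suc m" for n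
  proof (rule det_principal_mat_fork_path[OF _ _ _ _ _ _ _ that])
    show "?f i i = 1 + t\<^sup>2" for i
      using l by (simp add: qcartan_entry_TB)
    show "?f 0 1 = 0" "?f 1 0 = 0"
      using l by (simp_all add: qcartan_entry_TB)
    show "?f 2 0 * ?f 0 2 = t\<^sup>2" "?f 2 1 * ?f 1 2 = t\<^sup>2"
      using l by (simp_all add: qcartan_entry_TB power2_eq_square)
    show "?f (Suc k) k * ?f k (Suc k) = t\<^sup>2 \<and> (\<forall>x<k. ?f (Suc k) x = 0 \<and> ?f x (Suc k) = 0)"
      if "2 \<le> k" "k \<le> Suc m" for k
      using that l by (simp add: qcartan_entry_TB power2_eq_square)
  qed simp
  have "det (qcartan_aff (TB l) t) = det (principal_mat ?f [0..<Suc l])"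
    by (simp add: qcartan_aff_eq_principal_mat del: upt_Suc)
  also have "\<dots> = (1 + t\<^sup>2) * ((1 + t\<^sup>2) * (1 + (t\<^sup>2) ^ Suc (Suc m)))
      - 2 * t\<^sup>2 * ((1 + t\<^sup>2) * (1 + (t\<^sup>2) ^ Suc m))"
    using det_principal_mat_upt_Suc_Suc[of "Suc (Suc m)" ?f] fork[of "Suc m"] fork[of m] l
    by (simp add: qcartan_entry_TB power2_eq_square del: upt_Suc)
  also have "\<dots> = (1 - (t\<^sup>2)\<^sup>2) * (1 - (t\<^sup>2) ^ (l - 1))"
    by (simp add: l algebra_simps)
  finally show ?thesis
    by (simp flip: power_mult)
qed

lemma det_qcartan_aff_TD:
  assumes "4 \<le> l"
  shows "det (qcartan_aff (TD l) t) = (1 + t\<^sup>2) * (1 - t ^ 4) * (1 - t ^ (2 * (l - 2)))"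
proof -
  let ?f = "qcartan_entry (TD l) t"
  define m where "m = l - 4"
  have l: "l = Suc (Suc (Suc (Suc m)))"
    using assms by (simp add: m_def)
  have fork: "det (principal_mat ?f [0..<Suc (Suc n)]) = (1 + t\<^sup>2) * (1 + (t\<^sup>2) ^ Suc n)"
    if "n \<le> Suc (Suc m)" for n
  proof (rule det_principal_mat_fork_path[OF _ _ _ _ _ _ _ that])
    show "?f i i = 1 + t\<^sup>2" for i
      using l by (simp add: qcartan_entry_TD)
    show "?f 0 1 = 0" "?f 1 0 = 0"
      using l by (simp_all add: qcartan_entry_TD)
    show "?f 2 0 * ?f 0 2 = t\<^sup>2" "?f 2 1 * ?f 1 2 = t\<^sup>2"
      using l by (simp_all add: qcartan_entry_TD power2_eq_square)
    show "?f (Suc k) k * ?f k (Suc k) = t\<^sup>2 \<and> (\<forall>x<k. ?f (Suc k) x = 0 \<and> ?f x (Suc k) = 0)"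
      if "2 \<le> k" "k \<le> Suc (Suc m)" for k
      using that l by (simp add: qcartan_entry_TD power2_eq_square)
  qed simp
  \<comment> \<open>node \<open>l\<close> hangs off \<open>l - 2\<close>, not off \<open>l - 1\<close>: reorder so that it becomes the last node\<close>
  define zs where "zs = [0..<Suc (Suc m)] @ [Suc (Suc (Suc m))]"
  have "det (qcartan_aff (TD l) t) = det (principal_mat ?f [0..<Suc l])"
    by (simp add: qcartan_aff_eq_principal_mat del: upt_Suc)
  also have "\<dots> = det (principal_mat ?f (zs @ [Suc (Suc m), l]))"
    by (rule det_principal_mat_mset_eq) (simp add: l zs_def add_mset_commute)
  also have "\<dots> = ?f l l * det (principal_mat ?f (zs @ [Suc (Suc m)]))
      - ?f l (Suc (Suc m)) * ?f (Suc (Suc m)) l * det (principal_mat ?f zs)"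
    by (rule det_principal_mat_snoc_leaf) (auto simp: l zs_def qcartan_entry_TD)
  also have "det (principal_mat ?f (zs @ [Suc (Suc m)])) = det (principal_mat ?f [0..<l])"
    by (rule det_principal_mat_mset_eq) (simp add: l zs_def add_mset_commute)
  also have "det (principal_mat ?f zs) = ?f (Suc (Suc (Suc m))) (Suc (Suc (Suc m)))
      * det (principal_mat ?f [0..<Suc (Suc m)])"
    unfolding zs_def by (rule det_principal_mat_snoc_isolated) (auto simp: l qcartan_entry_TD)
  also have "?f l l * det (principal_mat ?f [0..<l]) - ?f l (Suc (Suc m)) * ?f (Suc (Suc m)) l
      * (?f (Suc (Suc (Suc m))) (Suc (Suc (Suc m))) * det (principal_mat ?f [0..<Suc (Suc m)]))
    = (1 + t\<^sup>2) * ((1 + t\<^sup>2) * (1 + (t\<^sup>2) ^ Suc (Suc (Suc m))))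
      - t\<^sup>2 * ((1 + t\<^sup>2) * ((1 + t\<^sup>2) * (1 + (t\<^sup>2) ^ Suc m)))"
    using fork[of "Suc (Suc m)"] fork[of m] l
    by (simp add: qcartan_entry_TD power2_eq_square del: upt_Suc)
  also have "\<dots> = (1 + t\<^sup>2) * (1 - (t\<^sup>2)\<^sup>2) * (1 - (t\<^sup>2) ^ (l - 2))"
    by (simp add: l algebra_simps)
  finally show ?thesis
    by (simp flip: power_mult)
qed

lemma det_qcartan_aff_TE6: "det (qcartan_aff TE6 t) = (1 + t\<^sup>2) * (1 - t ^ 6)\<^sup>2"
proof -
  let ?f = "qcartan_entry TE6 t"
  let ?D = "\<lambda>xs. det (principal_mat ?f xs)"
  define u where "u = t\<^sup>2"
  have u: "t\<^sup>2 = u" "t * t = u"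
    by (simp_all add: u_def power2_eq_square)
  note entry_simps = u qcartan_entry_diag qcartan_entry_off_diag sl_entry_def
  have d0123456: "?D [0, 1, 2, 3, 4, 5, 6] = 
      (1 + u) * ?D [0, 1, 2, 3, 4, 5] - u * ?D [0, 1, 2, 3, 4]"
    by (simp add: det_principal_mat_remove_leaf[of _ 6 5] entry_simps)
  have d012345: "?D [0, 1, 2, 3, 4, 5] = (1 + u) * ?D [0, 1, 2, 3, 4] - u * ?D [0, 1, 2, 3]"
    by (simp add: det_principal_mat_remove_leaf[of _ 5 4] entry_simps)
  have d01234: "?D [0, 1, 2, 3, 4] = (1 + u) * ?D [0, 2, 3, 4] - u * ?D [0, 2, 4]"
    by (simp add: det_principal_mat_remove_leaf[of _ 1 3] entry_simps)
  have d0234: "?D [0, 2, 3, 4] = (1 + u) * ?D [0, 2, 4] - u * ?D [0, 2]"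
    by (simp add: det_principal_mat_remove_leaf[of _ 3 4] entry_simps)
  have d024: "?D [0, 2, 4] = (1 + u) * ?D [0, 2] - u * (1 + u)"
    by (simp add: det_principal_mat_remove_leaf[of _ 4 2] entry_simps)
  have d0123: "?D [0, 1, 2, 3] = (1 + u) * ?D [0, 1, 2] - u * ?D [0, 2]"
    by (simp add: det_principal_mat_remove_leaf[of _ 3 1] entry_simps)
  have d012: "?D [0, 1, 2] = (1 + u) * ?D [0, 2]"
    by (simp add: det_principal_mat_remove_isolated[of _ 1] entry_simps)
  have d02: "?D [0, 2] = (1 + u) * (1 + u) - u"
    by (simp add: det_principal_mat_remove_leaf[of _ 2 0] entry_simps)
  have "det (qcartan_aff TE6 t) = ?D [0, 1, 2, 3, 4, 5, 6]"
    by (simp add: qcartan_aff_eq_principal_mat numeral_eq_Suc)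
  also have "\<dots> = (1 + u) * (1 - u ^ 3)\<^sup>2"
    unfolding d0123456 d012345 d01234 d0234 d024 d0123 d012 d02
    by (simp add: algebra_simps eval_nat_numeral)
  finally show ?thesis
    by (simp add: u_def flip: power_mult)
qed

lemma det_qcartan_aff_TE7: "det (qcartan_aff TE7 t) = (1 + t\<^sup>2) * (1 - t ^ 8) * (1 - t ^ 6)"
proof -
  let ?f = "qcartan_entry TE7 t"
  let ?D = "\<lambda>xs. det (principal_mat ?f xs)"
  define u where "u = t\<^sup>2"
  have u: "t\<^sup>2 = u" "t * t = u"
    by (simp_all add: u_def power2_eq_square)
  note entry_simps = u qcartan_entry_diag qcartan_entry_off_diag sl_entry_def
  have d01234567: "?D [0, 1, 2, 3, 4, 5, 6, 7] = 
      (1 + u) * ?D [0, 1, 2, 3, 4, 5, 6] - u * ?D [0, 1, 2, 3, 4, 5]"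
    by (simp add: det_principal_mat_remove_leaf[of _ 7 6] entry_simps)
  have d0123456: "?D [0, 1, 2, 3, 4, 5, 6] = 
      (1 + u) * ?D [0, 1, 2, 3, 4, 5] - u * ?D [0, 1, 2, 3, 4]"
    by (simp add: det_principal_mat_remove_leaf[of _ 6 5] entry_simps)
  have d012345: "?D [0, 1, 2, 3, 4, 5] = (1 + u) * ?D [0, 1, 2, 3, 4] - u * ?D [0, 1, 2, 3]"
    by (simp add: det_principal_mat_remove_leaf[of _ 5 4] entry_simps)
  have d01234: "?D [0, 1, 2, 3, 4] = (1 + u) * ?D [0, 1, 3, 4] - u * ?D [0, 1, 3]"
    by (simp add: det_principal_mat_remove_leaf[of _ 2 4] entry_simps)
  have d0134: "?D [0, 1, 3, 4] = (1 + u) * ?D [0, 1, 3] - u * ?D [0, 1]"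
    by (simp add: det_principal_mat_remove_leaf[of _ 4 3] entry_simps)
  have d0123: "?D [0, 1, 2, 3] = (1 + u) * ?D [0, 1, 3]"
    by (simp add: det_principal_mat_remove_isolated[of _ 2] entry_simps)
  have d013: "?D [0, 1, 3] = (1 + u) * ?D [0, 1] - u * (1 + u)"
    by (simp add: det_principal_mat_remove_leaf[of _ 3 1] entry_simps)
  have d01: "?D [0, 1] = (1 + u) * (1 + u) - u"
    by (simp add: det_principal_mat_remove_leaf[of _ 1 0] entry_simps)
  have "det (qcartan_aff TE7 t) = ?D [0, 1, 2, 3, 4, 5, 6, 7]"
    by (simp add: qcartan_aff_eq_principal_mat numeral_eq_Suc)
  also have "\<dots> = (1 + u) * (1 - u ^ 4) * (1 - u ^ 3)"
    unfolding d01234567 d0123456 d012345 d01234 d0134 d0123 d013 d01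
    by (simp add: algebra_simps eval_nat_numeral)
  finally show ?thesis
    by (simp add: u_def flip: power_mult)
qed

lemma det_qcartan_aff_TE8: "det (qcartan_aff TE8 t) = (1 + t\<^sup>2) * (1 - t ^ 10) * (1 - t ^ 6)"
proof -
  let ?f = "qcartan_entry TE8 t"
  let ?D = "\<lambda>xs. det (principal_mat ?f xs)"
  define u where "u = t\<^sup>2"
  have u: "t\<^sup>2 = u" "t * t = u"
    by (simp_all add: u_def power2_eq_square)
  note entry_simps = u qcartan_entry_diag qcartan_entry_off_diag sl_entry_def
  have d012345678: "?D [0, 1, 2, 3, 4, 5, 6, 7, 8] = 
      (1 + u) * ?D [0, 1, 3, 4, 5, 6, 7, 8] - u * ?D [0, 1, 3, 5, 6, 7, 8]"
    by (simp add: det_principal_mat_remove_leaf[of _ 2 4] entry_simps)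
  have d01345678: "?D [0, 1, 3, 4, 5, 6, 7, 8] = 
      (1 + u) * ?D [0, 3, 4, 5, 6, 7, 8] - u * ?D [0, 4, 5, 6, 7, 8]"
    by (simp add: det_principal_mat_remove_leaf[of _ 1 3] entry_simps)
  have d0345678: "?D [0, 3, 4, 5, 6, 7, 8] = 
      (1 + u) * ?D [0, 4, 5, 6, 7, 8] - u * ?D [0, 5, 6, 7, 8]"
    by (simp add: det_principal_mat_remove_leaf[of _ 3 4] entry_simps)
  have d0135678: "?D [0, 1, 3, 5, 6, 7, 8] = 
      (1 + u) * ?D [0, 3, 5, 6, 7, 8] - u * ?D [0, 5, 6, 7, 8]"
    by (simp add: det_principal_mat_remove_leaf[of _ 1 3] entry_simps)
  have d035678: "?D [0, 3, 5, 6, 7, 8] = (1 + u) * ?D [0, 5, 6, 7, 8]"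
    by (simp add: det_principal_mat_remove_isolated[of _ 3] entry_simps)
  have d045678: "?D [0, 4, 5, 6, 7, 8] = (1 + u) * ?D [0, 5, 6, 7, 8] - u * ?D [0, 6, 7, 8]"
    by (simp add: det_principal_mat_remove_leaf[of _ 4 5] entry_simps)
  have d05678: "?D [0, 5, 6, 7, 8] = (1 + u) * ?D [0, 6, 7, 8] - u * ?D [0, 7, 8]"
    by (simp add: det_principal_mat_remove_leaf[of _ 5 6] entry_simps)
  have d0678: "?D [0, 6, 7, 8] = (1 + u) * ?D [0, 7, 8] - u * ?D [0, 8]"
    by (simp add: det_principal_mat_remove_leaf[of _ 6 7] entry_simps)
  have d078: "?D [0, 7, 8] = (1 + u) * ?D [0, 8] - u * (1 + u)"
    by (simp add: det_principal_mat_remove_leaf[of _ 7 8] entry_simps)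
  have d08: "?D [0, 8] = (1 + u) * (1 + u) - u"
    by (simp add: det_principal_mat_remove_leaf[of _ 8 0] entry_simps)
  have "det (qcartan_aff TE8 t) = ?D [0, 1, 2, 3, 4, 5, 6, 7, 8]"
    by (simp add: qcartan_aff_eq_principal_mat numeral_eq_Suc)
  also have "\<dots> = (1 + u) * (1 - u ^ 5) * (1 - u ^ 3)"
    unfolding d012345678 d01345678 d0345678 d0135678 d035678 d045678 d05678 d0678 d078 d08
    by (simp add: algebra_simps eval_nat_numeral)
  finally show ?thesis
    by (simp add: u_def flip: power_mult)
qed

lemma det_qcartan_aff_TF4: "det (qcartan_aff TF4 t) = (1 - t ^ 6) * (1 - t ^ 4)"
proof -
  let ?f = "qcartan_entry TF4 t"
  let ?D = "\<lambda>xs. det (principal_mat ?f xs)"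
  define u where "u = t\<^sup>2"
  have u: "t\<^sup>2 = u" "t * t = u"
    by (simp_all add: u_def power2_eq_square)
  note entry_simps = u qcartan_entry_diag qcartan_entry_off_diag sl_entry_def
  have d01234: "?D [0, 1, 2, 3, 4] = (1 + u) * ?D [0, 1, 2, 3] - u * ?D [0, 1, 2]"
    by (simp add: det_principal_mat_remove_leaf[of _ 4 3] entry_simps)
  have d0123: "?D [0, 1, 2, 3] = (1 + u) * ?D [0, 1, 2] - 2 * u * ?D [0, 1]"
    by (simp add: det_principal_mat_remove_leaf[of _ 3 2] entry_simps)
  have d012: "?D [0, 1, 2] = (1 + u) * ?D [0, 1] - u * (1 + u)"
    by (simp add: det_principal_mat_remove_leaf[of _ 2 1] entry_simps)
  have d01: "?D [0, 1] = (1 + u) * (1 + u) - u"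
    by (simp add: det_principal_mat_remove_leaf[of _ 1 0] entry_simps)
  have "det (qcartan_aff TF4 t) = ?D [0, 1, 2, 3, 4]"
    by (simp add: qcartan_aff_eq_principal_mat numeral_eq_Suc)
  also have "\<dots> = (1 - u ^ 3) * (1 - u ^ 2)"
    unfolding d01234 d0123 d012 d01
    by (simp add: algebra_simps eval_nat_numeral)
  finally show ?thesis
    by (simp add: u_def flip: power_mult)
qed

lemma det_qcartan_aff_TG2: "det (qcartan_aff TG2 t) = (1 - t ^ 4) * (1 - t\<^sup>2)"
proof -
  let ?f = "qcartan_entry TG2 t"
  let ?D = "\<lambda>xs. det (principal_mat ?f xs)"
  define u where "u = t\<^sup>2"
  have u: "t\<^sup>2 = u" "t * t = u"
    by (simp_all add: u_def power2_eq_square)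
  note entry_simps = u qcartan_entry_diag qcartan_entry_off_diag sl_entry_def
  have d012: "?D [0, 1, 2] = (1 + u) * ?D [0, 1] - 3 * u * (1 + u)"
    by (simp add: det_principal_mat_remove_leaf[of _ 2 1] entry_simps)
  have d01: "?D [0, 1] = (1 + u) * (1 + u) - u"
    by (simp add: det_principal_mat_remove_leaf[of _ 1 0] entry_simps)
  have "det (qcartan_aff TG2 t) = ?D [0, 1, 2]"
    by (simp add: qcartan_aff_eq_principal_mat numeral_eq_Suc)
  also have "\<dots> = (1 - u ^ 2) * (1 - u)"
    unfolding d012 d01
    by (simp add: algebra_simps eval_nat_numeral)
  finally show ?thesis
    by (simp add: u_def flip: power_mult)
qed

lemma pow2_of_nat: "pow2 t (of_nat k) = t ^ (2 * k)"
  unfolding pow2_def by (metis floor_of_nat nat_int of_nat_mult of_nat_numeral)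

lemma pow2_half: "pow2 t (of_nat k / 2) = t ^ k"
  unfolding pow2_def by simp

lemma pow2_numeral: "pow2 t (numeral k) = t ^ (2 * numeral k)"
  using pow2_of_nat[of t "numeral k"] by simp

lemma pow2_1: "pow2 t 1 = t\<^sup>2"
  using pow2_of_nat[of t 1] by simp

lemma det_qcartan_aff_mult_pqr:
  assumes "valid_type X"
  shows "det (qcartan_aff X t) * (1 - t\<^sup>2) =
    (case pqr X of (p, q, r) \<Rightarrow> (1 - pow2 t p) * (1 - pow2 t q) * (1 - pow2 t r))"
proof (cases X)
  case (TA l)
  then show ?thesis
    using pow2_half[of t "Suc l"] by (simp add: det_qcartan_aff_TA pow2_1 power2_eq_square)
next
  case (TD l)
  then have l: "4 \<le> l"
    using assms by simp
  have "pow2 t (of_nat l - 2) = t ^ (2 * (l - 2))"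
    using l pow2_of_nat[of t "l - 2"] by (simp add: of_nat_diff)
  then have "(case pqr X of (p, q, r) \<Rightarrow> (1 - pow2 t p) * (1 - pow2 t q) * (1 - pow2 t r))
      = (1 - t ^ (2 * (l - 2))) * (1 - t ^ 4) * (1 - t ^ 4)"
    using TD by (simp add: pow2_numeral)
  also have "\<dots> = (1 + t\<^sup>2) * (1 - t ^ 4) * (1 - t ^ (2 * (l - 2))) * (1 - t\<^sup>2)"
    by (simp add: algebra_simps eval_nat_numeral)
  finally show ?thesis
    using TD l by (simp add: det_qcartan_aff_TD)
next
  case (TC l)
  then show ?thesis
    using assms by (simp add: det_qcartan_aff_TC pow2_of_nat pow2_1 algebra_simps)
next
  case (TB l)
  then have l: "3 \<le> l"
    using assms by simp
  have "pow2 t (of_nat l - 1) = t ^ (2 * (l - 1))"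
    using l pow2_of_nat[of t "l - 1"] by (simp add: of_nat_diff)
  then show ?thesis
    using TB l by (simp add: det_qcartan_aff_TB pow2_numeral pow2_1 mult_ac)
qed (simp_all add: det_qcartan_aff_TE6 det_qcartan_aff_TE7 det_qcartan_aff_TE8 det_qcartan_aff_TF4
  det_qcartan_aff_TG2 pow2_numeral pow2_1 algebra_simps eval_nat_numeral)

theorem mainTheorem3:
  fixes X :: cartan_type and t :: real
  assumes "valid_type X" and "1 - t\<^sup>2 \<noteq> 0"
  shows "det (qcartan_aff X t) =
    (case pqr X of (p, q, r) \<Rightarrow>
       (1 - pow2 t p) * (1 - pow2 t q) * (1 - pow2 t r) / (1 - t\<^sup>2))"
proof -
  obtain p q r where pqr: "pqr X = (p, q, r)"
    by (cases "pqr X") auto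
  show ?thesis
    using det_qcartan_aff_mult_pqr[OF assms(1), of t] assms(2)
    by (simp add: pqr eq_divide_eq)
qed

end
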